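(* Let $\lambda=(\lambda_1,\ldots,\lambda_n)\in\mathbb{R}_{<0}^n$ have pairwise distinct entries, and let $\lambda_{\neg\max}$ be the $(n-1)$-tuple obtained from $\lambda$ by removing its maximal entry. Then for each $k=1,\ldots,n-1$, $$\lim_{t\to\infty}\frac{\nu_{k-1,\lambda}(t)}{\nu_{k,\lambda}(t)}=\frac{\kappa_{k-1,\lambda_{\neg\max}}}{\kappa_{k,\lambda_{\neg\max}}}.$$
   Context: $V_\lambda$ is the $n\times n$ Vandermonde matrix with $(i,j)$ entry $\lambda_j^{i-1}$, and $[\nu_{0,\lambda}(t),\ldots,\nu_{n-1,\lambda}(t)]=[e^{\lambda_1 t},\ldots,e^{\lambda_n t}]V_\lambda^{-1}$. For a tuple $\mu=(\mu_1,\ldots,\mu_p)$, the companion coefficients $\kappa_{k,\mu}$ ($0\le k\le p$) are defined by $\prod_{j=1}^p(s-\mu_j)=\sum_{k=0}^p\kappa_{k,\mu}s^k$. *)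

theory Defs
  imports Complex_Main "HOL-Computational_Algebra.Polynomial"
    "Jordan_Normal_Form.Gauss_Jordan_Elimination"
begin

text \<open>Tuples are lists (0-indexed). V has (i,j) entry lam_j ^ i (rows i = 0..n-1).\<close>
definition vandermonde :: "real list \<Rightarrow> real mat" where
  "vandermonde lam = mat (length lam) (length lam) (\<lambda>(i,j). (lam ! j) ^ i)"

definition nu :: "nat \<Rightarrow> real list \<Rightarrow> real \<Rightarrow> real" where
  "nu k lam t = (\<Sum>j<length lam. exp (lam ! j * t) * (the (mat_inverse (vandermonde lam)) $$ (j, k)))"

definition kappa :: "nat \<Rightarrow> real list \<Rightarrow> real" where
  "kappa k mu = coeff (prod_list (map (\<lambda>m. [:- m, 1:]) mu)) k"

definition remove_max :: "real list \<Rightarrow> real list" where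
  "remove_max lam = remove1 (Max (set lam)) lam"

end

theory Submission
  imports Defs "Jordan_Normal_Form.Determinant"
begin

text \<open>The inverse of the Vandermonde matrix is explicit: its j-th row holds the coefficients of
  the Lagrange basis polynomial of the node \<open>\<lambda>\<^sub>j\<close>. Hence \<open>\<nu>\<^sub>k(t)\<close> is a sum of exponentials
  \<open>e\<^bsup>\<lambda>\<^sub>j t\<^esup>\<close> weighted by k-th coefficients of Lagrange polynomials, and as \<open>t \<rightarrow> \<infinity>\<close> the term of
  the largest node dominates. The ratio therefore tends to the ratio of two coefficients of the
  Lagrange polynomial of the maximal node, which is a nonzero multiple of the monic polynomial
  whose roots are the remaining nodes. All these roots are negative, so its coefficients up to
  its degree are positive and the limit is well defined.\<close>

definition poly_of_roots :: "'a::comm_ring_1 list \<Rightarrow> 'a poly" where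
  "poly_of_roots xs = prod_list (map (\<lambda>x. [:- x, 1:]) xs)"

lemma kappa_eq_coeff_poly_of_roots: "kappa k mu = coeff (poly_of_roots mu) k"
  unfolding kappa_def poly_of_roots_def ..

lemma poly_of_roots_Nil [simp]: "poly_of_roots [] = 1"
  and poly_of_roots_Cons [simp]: "poly_of_roots (x # xs) = [:- x, 1:] * poly_of_roots xs"
  unfolding poly_of_roots_def by simp_all

lemma poly_of_roots_eq_0_iff:
  fixes y :: "'a::idom"
  shows "poly (poly_of_roots xs) y = 0 \<longleftrightarrow> y \<in> set xs"
  by (induction xs) auto

lemma degree_poly_of_roots_le: "degree (poly_of_roots xs) \<le> length xs"
proof -
  have "degree (poly_of_roots xs) \<le> sum_list (map (degree \<circ> (\<lambda>x. [:- x, 1:])) xs)"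
    unfolding poly_of_roots_def using degree_prod_list_le by (metis map_map)
  also have "\<dots> = length xs"
    by (induction xs) simp_all
  finally show ?thesis .
qed

lemma coeff_poly_of_roots_Cons:
  "coeff (poly_of_roots (x # xs)) k =
     - x * coeff (poly_of_roots xs) k + (if k = 0 then 0 else coeff (poly_of_roots xs) (k - 1))"
  by (cases k) (simp_all add: mult_pCons_left)

lemma coeff_poly_of_roots_nonneg:
  fixes xs :: "'a::linordered_idom list"
  assumes "\<forall>x\<in>set xs. x \<le> 0"
  shows "coeff (poly_of_roots xs) k \<ge> 0"
  using assms
proof (induction xs arbitrary: k)
  case Nil
  then show ?case by (simp add: coeff_1)
next
  case (Cons x xs)
  then have "- x * coeff (poly_of_roots xs) k \<ge> 0"
    "(if k = 0 then 0 else coeff (poly_of_roots xs) (k - 1)) \<ge> 0"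
    by (simp_all add: mult_nonpos_nonneg)
  then show ?case unfolding coeff_poly_of_roots_Cons by linarith
qed

lemma coeff_poly_of_roots_pos:
  fixes xs :: "'a::linordered_idom list"
  assumes "\<forall>x\<in>set xs. x < 0" and "k \<le> length xs"
  shows "coeff (poly_of_roots xs) k > 0"
  using assms
proof (induction xs arbitrary: k)
  case Nil
  then show ?case by simp
next
  case (Cons x xs)
  show ?case
  proof (cases "k = 0")
    case True
    with Cons show ?thesis
      by (simp add: coeff_poly_of_roots_Cons mult_neg_pos)
  next
    case False
    have "coeff (poly_of_roots xs) k \<ge> 0"
      using Cons.prems(1) by (intro coeff_poly_of_roots_nonneg) auto
    then have "- x * coeff (poly_of_roots xs) k \<ge> 0"
      using Cons.prems(1) by (simp add: mult_nonpos_nonneg)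
    moreover have "coeff (poly_of_roots xs) (k - 1) > 0"
      using Cons False by simp
    ultimately show ?thesis
      unfolding coeff_poly_of_roots_Cons using False by (simp add: add_nonneg_pos)
  qed
qed

lemma poly_eq_sum_coeff:
  fixes x :: "'a::{comm_semiring_0,semiring_1}"
  assumes "degree p < n"
  shows "poly p x = (\<Sum>i<n. coeff p i * x ^ i)"
proof -
  have "poly p x = (\<Sum>i\<le>degree p. coeff p i * x ^ i)" by (rule poly_altdef)
  also have "\<dots> = (\<Sum>i<n. coeff p i * x ^ i)"
    by (rule sum.mono_neutral_left) (use assms in \<open>auto simp: coeff_eq_0\<close>)
  finally show ?thesis .
qed

definition lagrange_basis :: "'a::field list \<Rightarrow> nat \<Rightarrow> 'a poly" where
  "lagrange_basis xs j =
     Polynomial.smult (inverse (poly (poly_of_roots (remove1 (xs ! j) xs)) (xs ! j)))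
       (poly_of_roots (remove1 (xs ! j) xs))"

lemma degree_lagrange_basis:
  assumes "j < length xs"
  shows "degree (lagrange_basis xs j) < length xs"
proof -
  have "degree (lagrange_basis xs j) \<le> length (remove1 (xs ! j) xs)"
    unfolding lagrange_basis_def using degree_poly_of_roots_le degree_smult_le order_trans by blast
  also have "\<dots> < length xs"
    using assms by (simp add: length_remove1)
  finally show ?thesis .
qed

lemma poly_lagrange_basis:
  assumes "distinct xs" and "j < length xs" and "l < length xs"
  shows "poly (lagrange_basis xs j) (xs ! l) = (if l = j then 1 else 0)"
proof -
  let ?p = "poly_of_roots (remove1 (xs ! j) xs)"
  have root_iff: "poly ?p (xs ! i) = 0 \<longleftrightarrow> i \<noteq> j" if "i < length xs" for i
    using assms(1,2) that by (simp add: poly_of_roots_eq_0_iff set_remove1_eq nth_eq_iff_index_eq)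
  have "poly (lagrange_basis xs j) (xs ! l) = poly ?p (xs ! l) / poly ?p (xs ! j)"
    by (simp add: lagrange_basis_def divide_inverse mult.commute)
  then show ?thesis
    using root_iff[OF assms(2)] root_iff[OF assms(3)] by simp
qed

lemma coeff_lagrange_basis:
  "coeff (lagrange_basis xs j) i =
     coeff (poly_of_roots (remove1 (xs ! j) xs)) i / poly (poly_of_roots (remove1 (xs ! j) xs)) (xs ! j)"
  by (simp add: lagrange_basis_def divide_inverse mult.commute)

definition lagrange_coeff_mat :: "real list \<Rightarrow> real mat" where
  "lagrange_coeff_mat xs = mat (length xs) (length xs) (\<lambda>(j, k). coeff (lagrange_basis xs j) k)"

lemma lagrange_coeff_mat_mult_vandermonde:
  assumes "distinct xs"
  shows "lagrange_coeff_mat xs * vandermonde xs = 1\<^sub>m (length xs)"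
proof (rule eq_matI)
  fix j l assume "j < dim_row (1\<^sub>m (length xs))" "l < dim_col (1\<^sub>m (length xs))"
  then have j: "j < length xs" and l: "l < length xs" by simp_all
  have "(lagrange_coeff_mat xs * vandermonde xs) $$ (j, l) =
        (\<Sum>k<length xs. coeff (lagrange_basis xs j) k * (xs ! l) ^ k)"
    using j l by (simp add: lagrange_coeff_mat_def vandermonde_def scalar_prod_def atLeast0LessThan)
  also have "\<dots> = poly (lagrange_basis xs j) (xs ! l)"
    by (rule poly_eq_sum_coeff[symmetric, OF degree_lagrange_basis[OF j]])
  also have "\<dots> = 1\<^sub>m (length xs) $$ (j, l)"
    using assms j l by (simp add: poly_lagrange_basis)
  finally show "(lagrange_coeff_mat xs * vandermonde xs) $$ (j, l) = 1\<^sub>m (length xs) $$ (j, l)" .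
qed (simp_all add: lagrange_coeff_mat_def vandermonde_def)

lemma mat_inverse_eq_left_inverse:
  fixes A B :: "'a::field mat"
  assumes A: "A \<in> carrier_mat n n" and B: "B \<in> carrier_mat n n" and BA: "B * A = 1\<^sub>m n"
  shows "mat_inverse A = Some B"
proof -
  have "A * B = 1\<^sub>m n"
    by (rule mat_mult_left_right_inverse[OF B A BA])
  then have "A \<in> Units (ring_mat TYPE('a) n undefined)"
    using A B BA unfolding Units_def ring_mat_def by auto
  then obtain B' where B': "mat_inverse A = Some B'"
    using mat_inverse(1)[OF A, of undefined] by (cases "mat_inverse A") auto
  then have AB': "A * B' = 1\<^sub>m n" and B'_carrier: "B' \<in> carrier_mat n n"
    using mat_inverse(2)[OF A] by auto
  have "B' = (B * A) * B'" using B'_carrier BA by simp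
  also have "\<dots> = B * (A * B')" using A B B'_carrier by (simp add: assoc_mult_mat)
  also have "\<dots> = B" using AB' B by simp
  finally show ?thesis using B' by simp
qed

lemma mat_inverse_vandermonde:
  assumes "distinct xs"
  shows "mat_inverse (vandermonde xs) = Some (lagrange_coeff_mat xs)"
  by (rule mat_inverse_eq_left_inverse[OF _ _ lagrange_coeff_mat_mult_vandermonde[OF assms]])
     (simp_all add: lagrange_coeff_mat_def vandermonde_def)

lemma nu_eq_sum_lagrange_basis:
  assumes "distinct lam" and "k < length lam"
  shows "nu k lam t = (\<Sum>j<length lam. exp (lam ! j * t) * coeff (lagrange_basis lam j) k)"
  using assms by (simp add: nu_def mat_inverse_vandermonde lagrange_coeff_mat_def)

lemma tendsto_exp_sum_dominant:
  fixes r a :: "'i \<Rightarrow> real"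
  assumes "finite I" and "m \<in> I" and "\<And>j. j \<in> I \<Longrightarrow> j \<noteq> m \<Longrightarrow> r j < r m"
  shows "((\<lambda>t. \<Sum>j\<in>I. exp ((r j - r m) * t) * a j) \<longlongrightarrow> a m) at_top"
proof -
  have "((\<lambda>t. \<Sum>j\<in>I. exp ((r j - r m) * t) * a j) \<longlongrightarrow> (\<Sum>j\<in>I. if j = m then a j else 0)) at_top"
  proof (rule tendsto_sum)
    fix j assume j: "j \<in> I"
    show "((\<lambda>t. exp ((r j - r m) * t) * a j) \<longlongrightarrow> (if j = m then a j else 0)) at_top"
    proof (cases "j = m")
      case False
      then have "filterlim (\<lambda>t. (r j - r m) * t) at_bot at_top"
        using assms(3)[OF j] by (intro filterlim_tendsto_neg_mult_at_bot[OF tendsto_const _ filterlim_ident]) simp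
      then have "((\<lambda>t. exp ((r j - r m) * t)) \<longlongrightarrow> 0) at_top"
        by (rule filterlim_compose[OF exp_at_bot])
      then show ?thesis using False by (simp add: tendsto_mult_left_zero)
    qed simp
  qed
  then show ?thesis using assms(1,2) by simp
qed

lemma tendsto_ratio_exp_sums:
  fixes r a b :: "'i \<Rightarrow> real"
  assumes "finite I" and "m \<in> I" and "\<And>j. j \<in> I \<Longrightarrow> j \<noteq> m \<Longrightarrow> r j < r m" and "b m \<noteq> 0"
  shows "((\<lambda>t. (\<Sum>j\<in>I. exp (r j * t) * a j) / (\<Sum>j\<in>I. exp (r j * t) * b j)) \<longlongrightarrow> a m / b m) at_top"
proof -
  have factor: "(\<Sum>j\<in>I. exp (r j * t) * c j) = exp (r m * t) * (\<Sum>j\<in>I. exp ((r j - r m) * t) * c j)"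
    for c :: "'i \<Rightarrow> real" and t
    by (simp add: sum_distrib_left left_diff_distrib exp_diff)
  have "((\<lambda>t. (\<Sum>j\<in>I. exp ((r j - r m) * t) * a j) / (\<Sum>j\<in>I. exp ((r j - r m) * t) * b j))
          \<longlongrightarrow> a m / b m) at_top"
    using assms by (intro tendsto_divide tendsto_exp_sum_dominant)
  then show ?thesis unfolding factor by simp
qed

lemma kappa_remove_max_pos:
  assumes "\<forall>x\<in>set lam. x < 0" and "k \<le> length lam - 1"
  shows "kappa k (remove_max lam) > 0"
proof (cases "lam = []")
  case False
  then have "length (remove_max lam) = length lam - 1"
    by (simp add: remove_max_def length_remove1)
  then show ?thesis
    using assms set_remove1_subset[of _ lam] unfolding kappa_eq_coeff_poly_of_roots remove_max_def
    by (intro coeff_poly_of_roots_pos) auto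
qed (use assms(2) in \<open>simp add: remove_max_def kappa_eq_coeff_poly_of_roots\<close>)

theorem proposition8:
  fixes lam :: "real list" and k :: nat
  assumes "distinct lam"
    and "\<forall>x\<in>set lam. x < 0"
    and "1 \<le> k" and "k \<le> length lam - 1"
  shows "((\<lambda>t. nu (k - 1) lam t / nu k lam t) \<longlongrightarrow>
           kappa (k - 1) (remove_max lam) / kappa k (remove_max lam)) at_top"
proof -
  have "lam \<noteq> []" using assms(3,4) by auto
  then obtain m where m: "m < length lam" "lam ! m = Max (set lam)"
    by (metis Max_in finite_set in_set_conv_nth set_empty)
  have dominant: "lam ! j < lam ! m" if "j < length lam" "j \<noteq> m" for j
    using that m assms(1) by (metis Max_ge finite_set nth_eq_iff_index_eq nth_mem order_le_neq_trans)
  let ?p = "poly_of_roots (remove_max lam)"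
  have remove1_max_eq: "remove1 (lam ! m) lam = remove_max lam"
    by (simp add: remove_max_def m(2))
  have "lam ! m \<notin> set (remove_max lam)"
    using assms(1) by (simp add: remove_max_def m(2))
  then have "poly ?p (lam ! m) \<noteq> 0"
    by (simp add: poly_of_roots_eq_0_iff)
  have "kappa k (remove_max lam) > 0"
    using assms(2,4) by (rule kappa_remove_max_pos)
  have nu_sum: "nu i lam = (\<lambda>t. \<Sum>j<length lam. exp (lam ! j * t) * coeff (lagrange_basis lam j) i)"
    if "i \<le> k" for i
    using that assms(1,4) m(1) by (auto simp: nu_eq_sum_lagrange_basis)
  have "((\<lambda>t. nu (k - 1) lam t / nu k lam t) \<longlongrightarrow>
          coeff (lagrange_basis lam m) (k - 1) / coeff (lagrange_basis lam m) k) at_top"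
    unfolding nu_sum[OF diff_le_self] nu_sum[OF order_refl]
    using m(1) dominant \<open>poly ?p (lam ! m) \<noteq> 0\<close> \<open>kappa k (remove_max lam) > 0\<close>
    by (intro tendsto_ratio_exp_sums)
       (simp_all add: coeff_lagrange_basis remove1_max_eq kappa_eq_coeff_poly_of_roots)
  then show ?thesis
    using \<open>poly ?p (lam ! m) \<noteq> 0\<close>
    by (simp add: coeff_lagrange_basis remove1_max_eq kappa_eq_coeff_poly_of_roots)
qed

end
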